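(* Under the standing setup below, every antichain in the forcing notion $Q$ is countable.
   Context: For $\lambda>1$, an injection $f$ is $\lambda$-bi-Lipschitz if for all distinct $a,b$ in its domain $d(f(a),f(b))<\lambda d(a,b)$ and $d(a,b)<\lambda d(f(a),f(b))$. Standing setup: $\{A_\alpha:\alpha<\omega_3\}$ are subsets of $\omega_1$, each of cardinality $\aleph_1$, with $A_\alpha\cap A_\beta$ finite for $\alpha\ne\beta$; each $A_\alpha$ is partitioned as $A_\alpha=\bigcup_{i<\omega_1}A_{\alpha,i}$ into pairwise disjoint countably infinite sets; $\langle d_\alpha:\alpha<\omega_3\rangle$ is a sequence of metrics on $\omega_1$ with each $(\omega_1,d_\alpha)$ separable. The forcing $Q$: a condition is $p=\langle w^p,u^p,d^p,\bar f^p,\bar\varepsilon^p\rangle$ where $w^p\subseteq\omega_3$ is finite; $u^p\subseteq\omega_1$ is finite and $d^p$ is a rational-valued metric on $u^p$; $\bar\varepsilon^p=\langle\varepsilon^p_\alpha:\alpha\in w^p\rangle$ are rationals in $(0,1)$; $\bar f^p=\langle f^p_\alpha:\alpha\in w^p\rangle$ where each $f^p_\alpha$ is a function from a finite subset of $\omega_1$ into $u^p$ with $f^p_\alpha(i)\in A_{\alpha,i}$ for $i\in\operatorname{dom}f^p_\alpha$, and $f^p_\alpha$ is $(1+\varepsilon^p_\alpha)$-bi-Lipschitz from $(\operatorname{dom}f^p_\alpha,d_\alpha)$ to $(u^p,d^p)$. Order: $p\le q$ iff $w^p\subseteq w^q$, $u^p\subseteq u^q$, $d^q$ extends $d^p$,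 and for all $\alpha\in w^p$, $\varepsilon^q_\alpha=\varepsilon^p_\alpha$ and $f^p_\alpha\subseteq f^q_\alpha$. Two conditions are incompatible if they have no common extension; an antichain is a set of pairwise incompatible conditions. *)

theory Defs
  imports Complex_Main "HOL-Library.Countable_Set"
begin

text \<open>The type 'w plays the role of omega_1 (as a bare set, cardinality aleph_1),
the type 'k plays the role of omega_3 (index set, cardinality aleph_3).\<close>

definition aleph1_type :: "'w itself \<Rightarrow> bool" where
  "aleph1_type _ \<longleftrightarrow> (card_of (UNIV :: 'w set), cardSuc natLeq) \<in> ordIso"

definition aleph3_type :: "'k itself \<Rightarrow> bool" where
  "aleph3_type _ \<longleftrightarrow> (card_of (UNIV :: 'k set), cardSuc (cardSuc (cardSuc natLeq))) \<in> ordIso"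

definition metric_on :: "'w set \<Rightarrow> ('w \<Rightarrow> 'w \<Rightarrow> 'r::linordered_field) \<Rightarrow> bool" where
  "metric_on S d \<longleftrightarrow>
     (\<forall>x\<in>S. \<forall>y\<in>S. 0 \<le> d x y \<and> (d x y = 0 \<longleftrightarrow> x = y) \<and> d x y = d y x) \<and>
     (\<forall>x\<in>S. \<forall>y\<in>S. \<forall>z\<in>S. d x z \<le> d x y + d y z)"

definition separable_metric :: "('w \<Rightarrow> 'w \<Rightarrow> real) \<Rightarrow> bool" where
  "separable_metric d \<longleftrightarrow>
     (\<exists>D. countable D \<and> (\<forall>x. \<forall>e>0. \<exists>y\<in>D. d x y < e))"

definition bi_lipschitz :: "real \<Rightarrow> ('w \<Rightarrow> 'w \<Rightarrow> real) \<Rightarrow> ('w \<Rightarrow> 'w \<Rightarrow> real) \<Rightarrow> ('w \<rightharpoonup> 'w) \<Rightarrow> bool" where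
  "bi_lipschitz lam d1 d2 f \<longleftrightarrow>
     inj_on (\<lambda>i. the (f i)) (dom f) \<and>
     (\<forall>a\<in>dom f. \<forall>b\<in>dom f. a \<noteq> b \<longrightarrow>
        d2 (the (f a)) (the (f b)) < lam * d1 a b \<and> d1 a b < lam * d2 (the (f a)) (the (f b)))"

text \<open>Conditions of Q, stored canonically: outside w the functions are empty and
epsilon is 0; the metric d is 0 outside u x u.\<close>
record ('k, 'w) cond =
  cw :: "'k set"
  cu :: "'w set"
  cd :: "'w \<Rightarrow> 'w \<Rightarrow> rat"
  cf :: "'k \<Rightarrow> ('w \<rightharpoonup> 'w)"
  ceps :: "'k \<Rightarrow> rat"

definition is_cond ::
  "('k \<Rightarrow> 'w \<Rightarrow> 'w set) \<Rightarrow> ('k \<Rightarrow> 'w \<Rightarrow> 'w \<Rightarrow> real) \<Rightarrow> ('k, 'w) cond \<Rightarrow> bool" where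
  "is_cond Apart dd p \<longleftrightarrow>
     finite (cw p) \<and> finite (cu p) \<and>
     metric_on (cu p) (cd p) \<and>
     (\<forall>x y. (x \<notin> cu p \<or> y \<notin> cu p) \<longrightarrow> cd p x y = 0) \<and>
     (\<forall>\<alpha>. \<alpha> \<notin> cw p \<longrightarrow> cf p \<alpha> = Map.empty \<and> ceps p \<alpha> = 0) \<and>
     (\<forall>\<alpha>\<in>cw p. 0 < ceps p \<alpha> \<and> ceps p \<alpha> < 1 \<and>
        finite (dom (cf p \<alpha>)) \<and> ran (cf p \<alpha>) \<subseteq> cu p \<and>
        (\<forall>i\<in>dom (cf p \<alpha>). the (cf p \<alpha> i) \<in> Apart \<alpha> i) \<and>
        bi_lipschitz (1 + real_of_rat (ceps p \<alpha>)) (dd \<alpha>)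
           (\<lambda>x y. real_of_rat (cd p x y)) (cf p \<alpha>))"

text \<open>cond_le p q: q extends p (written p <= q in the paper).\<close>
definition cond_le :: "('k, 'w) cond \<Rightarrow> ('k, 'w) cond \<Rightarrow> bool" where
  "cond_le p q \<longleftrightarrow>
     cw p \<subseteq> cw q \<and> cu p \<subseteq> cu q \<and>
     (\<forall>x\<in>cu p. \<forall>y\<in>cu p. cd q x y = cd p x y) \<and>
     (\<forall>\<alpha>\<in>cw p. ceps q \<alpha> = ceps p \<alpha> \<and> cf p \<alpha> \<subseteq>\<^sub>m cf q \<alpha>)"

definition cond_compatible ::
  "('k \<Rightarrow> 'w \<Rightarrow> 'w set) \<Rightarrow> ('k \<Rightarrow> 'w \<Rightarrow> 'w \<Rightarrow> real) \<Rightarrow> ('k, 'w) cond \<Rightarrow> ('k, 'w) cond \<Rightarrow> bool" where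
  "cond_compatible Apart dd p q \<longleftrightarrow> (\<exists>r. is_cond Apart dd r \<and> cond_le p r \<and> cond_le q r)"

definition cond_antichain ::
  "('k \<Rightarrow> 'w \<Rightarrow> 'w set) \<Rightarrow> ('k \<Rightarrow> 'w \<Rightarrow> 'w \<Rightarrow> real) \<Rightarrow> ('k, 'w) cond set \<Rightarrow> bool" where
  "cond_antichain Apart dd S \<longleftrightarrow>
     (\<forall>p\<in>S. is_cond Apart dd p) \<and>
     (\<forall>p\<in>S. \<forall>q\<in>S. p \<noteq> q \<longrightarrow> \<not> cond_compatible Apart dd p q)"

end

(* Thin an uncountable set of conditions, by the Delta-system lemma applied to the index sets,
   the point sets and the domains of the maps, to an uncountable Delta-system, and then, by
   pigeonhole, to one whose members have the same code: the same epsilons and map values on the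
   root, the same distance matrix, the same margin kappa, and the same approximations, from a
   countable dense set, of the preimage of every point under every root map. There are only
   countably many codes since the pieces A_{alpha,i} are countable and the metrics separable.
   By almost disjointness only countably many members put a new point into the range of two root
   maps. Two remaining conditions p, q are amalgamated by identifying each point of q with its
   copy in p, except that a new point x of p and its copy sigma x are kept at a small rational
   distance, which at most one root map constrains. The margin of p, a lower bound for its
   distances and for the slack in its strict bi-Lipschitz inequalities, absorbs the error, since
   preimages of x and sigma x are less than kappa/2 apart. *)

theory Submission
  imports Defs
begin

section \<open>Uncountable families of finite sets\<close>

lemma uncountable_fiber:
  assumes "uncountable T" "h ` T \<subseteq> C" "countable C"
  obtains c where "uncountable {p\<in>T. h p = c}"
proof -
  have "T = (\<Union>c\<in>C. {p\<in>T. h p = c})" using assms(2) by blast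
  with assms(1,3) show thesis using that by (metis (no_types, lifting) countable_UN subset_eq)
qed

lemma uncountable_ex_neq:
  assumes "uncountable T"
  obtains q where "q \<in> T" "q \<noteq> p"
proof -
  have "uncountable (T - {p})" using assms by simp
  then obtain q where "q \<in> T - {p}" by (metis countable_empty ex_in_conv)
  with that show thesis by blast
qed

lemma uncountable_disjoint_subfamily:
  assumes unc: "uncountable T"
    and fin: "\<And>p. p \<in> T \<Longrightarrow> finite (g p)"
    and thin: "\<And>x. countable {p\<in>T. x \<in> g p}"
  obtains T' where "T' \<subseteq> T" "uncountable T'"
    "\<And>p q. p \<in> T' \<Longrightarrow> q \<in> T' \<Longrightarrow> p \<noteq> q \<Longrightarrow> g p \<inter> g q = {}"
proof -
  define Fam where "Fam = {T'. T' \<subseteq> T \<and> (\<forall>p\<in>T'. \<forall>q\<in>T'. p \<noteq> q \<longrightarrow> g p \<inter> g q = {})}"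
  have "\<forall>C\<in>chains Fam. \<Union>C \<in> Fam"
  proof
    fix C assume C: "C \<in> chains Fam"
    have sub: "C \<subseteq> Fam" and ch: "\<And>X Y. X \<in> C \<Longrightarrow> Y \<in> C \<Longrightarrow> X \<subseteq> Y \<or> Y \<subseteq> X"
      using C unfolding chains_def chain_subset_def by blast+
    show "\<Union>C \<in> Fam" unfolding Fam_def
    proof (intro CollectI conjI ballI impI)
      show "\<Union>C \<subseteq> T" using sub unfolding Fam_def by blast
      fix p q assume "p \<in> \<Union>C" "q \<in> \<Union>C" "p \<noteq> q"
      then obtain X Y where XY: "X \<in> C" "Y \<in> C" "p \<in> X" "q \<in> Y" by blast
      then obtain Z where "Z \<in> C" "p \<in> Z" "q \<in> Z" using ch[OF XY(1,2)] by blast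
      with sub \<open>p \<noteq> q\<close> show "g p \<inter> g q = {}" unfolding Fam_def by blast
    qed
  qed
  from Zorn_Lemma[OF this] obtain M where M: "M \<in> Fam" and max: "\<forall>X\<in>Fam. M \<subseteq> X \<longrightarrow> X = M"
    by blast
  have "uncountable M"
  proof
    \<comment> \<open>otherwise \<open>M\<close> meets only countably many members and could be extended\<close>
    assume cM: "countable M"
    have "countable (\<Union>(g ` M))"
      using cM M fin unfolding Fam_def by (intro countable_UN) (auto intro: countable_finite)
    then have "countable ((\<Union>x\<in>\<Union>(g ` M). {p\<in>T. x \<in> g p}) \<union> M)"
      using thin cM by blast
    from uncountable_minus_countable[OF unc this]
    have "T - ((\<Union>x\<in>\<Union>(g ` M). {p\<in>T. x \<in> g p}) \<union> M) \<noteq> {}"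
      by (metis countable_empty)
    then obtain p where p: "p \<in> T" "p \<notin> M" "\<forall>x\<in>\<Union>(g ` M). x \<notin> g p" by blast
    then have "insert p M \<in> Fam" using M unfolding Fam_def by blast
    with max have "insert p M = M" by (simp add: subset_insertI)
    with p(2) show False by blast
  qed
  with M show thesis unfolding Fam_def by (intro that[of M]) auto
qed

lemma delta_system_card_le:
  assumes "uncountable T" "\<And>p. p \<in> T \<Longrightarrow> finite (g p) \<and> card (g p) \<le> n"
  shows "\<exists>T'\<subseteq>T. uncountable T' \<and> (\<exists>Rt. \<forall>p\<in>T'. \<forall>q\<in>T'. p \<noteq> q \<longrightarrow> g p \<inter> g q = Rt)"
  using assms
proof (induction n arbitrary: T g)
  case 0
  then have "\<forall>p\<in>T. \<forall>q\<in>T. p \<noteq> q \<longrightarrow> g p \<inter> g q = {}" by fastforce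
  with "0.prems"(1) show ?case by (intro exI[of _ T] conjI) auto
next
  case (Suc n)
  show ?case
  proof (cases "\<exists>x. uncountable {p\<in>T. x \<in> g p}")
    case True
    then obtain x where x: "uncountable {p\<in>T. x \<in> g p}" by blast
    have fin': "finite (g p - {x}) \<and> card (g p - {x}) \<le> n" if "p \<in> {p\<in>T. x \<in> g p}" for p
      using Suc.prems(2)[of p] that by auto
    have "\<exists>T'\<subseteq>{p\<in>T. x \<in> g p}. uncountable T' \<and>
        (\<exists>Rt. \<forall>p\<in>T'. \<forall>q\<in>T'. p \<noteq> q \<longrightarrow> (g p - {x}) \<inter> (g q - {x}) = Rt)"
      using x fin' by (rule Suc.IH)
    then obtain T' Rt where T': "T' \<subseteq> {p\<in>T. x \<in> g p}" "uncountable T'"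
      and root: "\<forall>p\<in>T'. \<forall>q\<in>T'. p \<noteq> q \<longrightarrow> (g p - {x}) \<inter> (g q - {x}) = Rt"
      by (elim exE conjE) auto
    have "\<forall>p\<in>T'. \<forall>q\<in>T'. p \<noteq> q \<longrightarrow> g p \<inter> g q = insert x Rt"
    proof (intro ballI impI)
      fix p q assume "p \<in> T'" "q \<in> T'" "p \<noteq> q"
      with T'(1) root have "x \<in> g p" "x \<in> g q" "(g p - {x}) \<inter> (g q - {x}) = Rt" by auto
      then show "g p \<inter> g q = insert x Rt" by auto
    qed
    with T' show ?thesis by (intro exI[of _ T'] conjI) auto
  next
    case False
    then have thin: "countable {p\<in>T. x \<in> g p}" for x by simp
    have fin: "finite (g p)" if "p \<in> T" for p using Suc.prems(2)[OF that] by simp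
    obtain T' where "T' \<subseteq> T" "uncountable T'"
      "\<And>p q. p \<in> T' \<Longrightarrow> q \<in> T' \<Longrightarrow> p \<noteq> q \<Longrightarrow> g p \<inter> g q = {}"
      by (rule uncountable_disjoint_subfamily[OF Suc.prems(1) fin thin]) auto
    then show ?thesis by (intro exI[of _ T'] conjI) auto
  qed
qed

lemma delta_system_uncountable:
  assumes "uncountable T" "\<And>p. p \<in> T \<Longrightarrow> finite (g p)"
  obtains T' Rt where "T' \<subseteq> T" "uncountable T'"
    "\<And>p q. p \<in> T' \<Longrightarrow> q \<in> T' \<Longrightarrow> p \<noteq> q \<Longrightarrow> g p \<inter> g q = Rt"
proof -
  obtain n where n: "uncountable {p\<in>T. card (g p) = n}"
    using uncountable_fiber[OF assms(1), of "\<lambda>p. card (g p)" UNIV] by auto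
  have fin: "finite (g p) \<and> card (g p) \<le> n" if "p \<in> {p\<in>T. card (g p) = n}" for p
    using assms(2) that by simp
  have "\<exists>T'\<subseteq>{p\<in>T. card (g p) = n}. uncountable T' \<and>
      (\<exists>Rt. \<forall>p\<in>T'. \<forall>q\<in>T'. p \<noteq> q \<longrightarrow> g p \<inter> g q = Rt)"
    using n fin by (rule delta_system_card_le)
  then obtain T' Rt where "T' \<subseteq> {p\<in>T. card (g p) = n}"
    "uncountable T'" "\<forall>p\<in>T'. \<forall>q\<in>T'. p \<noteq> q \<longrightarrow> g p \<inter> g q = Rt"
    by (elim exE conjE) auto
  then show thesis by (intro that[of T' Rt]) auto
qed

lemma countable_delta_system_meeting_finite:
  assumes root: "\<And>p q. p \<in> T \<Longrightarrow> q \<in> T \<Longrightarrow> p \<noteq> q \<Longrightarrow> g p \<inter> g q = U" and "finite F"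
  shows "countable {p\<in>T. (g p - U) \<inter> F \<noteq> {}}"
proof -
  have single: "countable {p\<in>T. x \<in> g p - U}" for x
  proof (cases "\<exists>p'\<in>T. x \<in> g p' - U")
    case True
    then obtain p' where "p' \<in> T" "x \<in> g p' - U" by blast
    then have "{p\<in>T. x \<in> g p - U} \<subseteq> {p'}" using root by blast
    then show ?thesis by (rule countable_subset) simp
  next
    case False
    then have "{p\<in>T. x \<in> g p - U} = {}" by blast
    then show ?thesis by (simp only: countable_empty)
  qed
  have "countable (\<Union>x\<in>F. {p\<in>T. x \<in> g p - U})"
    by (rule countable_UN[OF countable_finite[OF \<open>finite F\<close>] single])
  moreover have "{p\<in>T. (g p - U) \<inter> F \<noteq> {}} \<subseteq> (\<Union>x\<in>F. {p\<in>T. x \<in> g p - U})" by blast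
  ultimately show ?thesis by (rule countable_subset[rotated])
qed

section \<open>Metrics and bi-Lipschitz maps\<close>

lemma metric_onD:
  assumes "metric_on S d" "x \<in> S" "y \<in> S"
  shows "0 \<le> d x y" "d x y = 0 \<longleftrightarrow> x = y" "d x y = d y x"
    "\<And>z. z \<in> S \<Longrightarrow> d x y \<le> d x z + d z y"
  using assms unfolding metric_on_def by blast+

lemma metric_on_UNIV_pos:
  assumes "metric_on UNIV d" "x \<noteq> y"
  shows "0 < d x y"
proof -
  have "0 \<le> d x y" "d x y \<noteq> 0" using metric_onD(1,2)[OF assms(1)] assms(2) by auto
  then show ?thesis by simp
qed

definition dense_subset :: "('w \<Rightarrow> 'w \<Rightarrow> real) \<Rightarrow> 'w set" where
  "dense_subset d = (SOME D. countable D \<and> (\<forall>x. \<forall>e>0. \<exists>y\<in>D. d x y < e))"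

definition dense_approx :: "('w \<Rightarrow> 'w \<Rightarrow> real) \<Rightarrow> real \<Rightarrow> 'w \<Rightarrow> 'w" where
  "dense_approx d e a = (SOME z. z \<in> dense_subset d \<and> d a z < e)"

lemma dense_subset:
  assumes "separable_metric d"
  shows "countable (dense_subset d)" "\<And>x e. 0 < e \<Longrightarrow> \<exists>y\<in>dense_subset d. d x y < e"
  using someI_ex[OF assms[unfolded separable_metric_def]] unfolding dense_subset_def by blast+

lemma dense_approx:
  assumes "separable_metric d" "0 < e"
  shows "dense_approx d e a \<in> dense_subset d" "d a (dense_approx d e a) < e"
proof -
  have "\<exists>z. z \<in> dense_subset d \<and> d a z < e" using dense_subset(2)[OF assms] by blast
  from someI_ex[OF this] show "dense_approx d e a \<in> dense_subset d" "d a (dense_approx d e a) < e"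
    unfolding dense_approx_def by blast+
qed

lemma bi_lipschitzD:
  assumes "bi_lipschitz lam d1 d2 f" "a \<in> dom f" "b \<in> dom f" "a \<noteq> b"
  shows "d2 (the (f a)) (the (f b)) < lam * d1 a b" "d1 a b < lam * d2 (the (f a)) (the (f b))"
  using assms unfolding bi_lipschitz_def by blast+

lemma bi_lipschitz_inj:
  assumes "bi_lipschitz lam d1 d2 f" "f a = Some x" "f b = Some x"
  shows "a = b"
  using assms unfolding bi_lipschitz_def inj_on_def by (metis domI option.sel)

lemma bi_lipschitz_cong:
  assumes "\<And>x y. x \<in> ran f \<Longrightarrow> y \<in> ran f \<Longrightarrow> d2 x y = d2' x y"
  shows "bi_lipschitz lam d1 d2 f = bi_lipschitz lam d1 d2' f"
proof -
  have "the (f a) \<in> ran f" if "a \<in> dom f" for a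
    using that by (auto simp: ran_def)
  then show ?thesis unfolding bi_lipschitz_def using assms by (metis (no_types, lifting))
qed

lemma bi_lipschitzI:
  assumes "\<And>a b. a \<in> dom f \<Longrightarrow> b \<in> dom f \<Longrightarrow> a \<noteq> b \<Longrightarrow>
      d2 (the (f a)) (the (f b)) < lam * d1 a b \<and> d1 a b < lam * d2 (the (f a)) (the (f b))"
    and "\<And>a b. a \<noteq> b \<Longrightarrow> 0 < d1 a b" and "\<And>x. d2 x x = 0"
  shows "bi_lipschitz lam d1 d2 f"
  unfolding bi_lipschitz_def inj_on_def
proof (intro conjI ballI impI)
  fix a b assume ab: "a \<in> dom f" "b \<in> dom f"
  show "the (f a) = the (f b) \<Longrightarrow> a = b"
    using assms(1)[OF ab] assms(2,3) by (metis mult_zero_right order_less_asym)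
  show "a \<noteq> b \<Longrightarrow> d2 (the (f a)) (the (f b)) < lam * d1 a b" 
    and "a \<noteq> b \<Longrightarrow> d1 a b < lam * d2 (the (f a)) (the (f b))"
    using assms(1)[OF ab] by blast+
qed

section \<open>Conditions\<close>

lemma is_condD:
  assumes "is_cond Apart dd p"
  shows "finite (cw p)" "finite (cu p)" "metric_on (cu p) (cd p)"
    "\<And>x y. x \<notin> cu p \<or> y \<notin> cu p \<Longrightarrow> cd p x y = 0"
    "\<And>\<alpha>. \<alpha> \<notin> cw p \<Longrightarrow> cf p \<alpha> = Map.empty"
    "\<And>\<alpha>. \<alpha> \<notin> cw p \<Longrightarrow> ceps p \<alpha> = 0"
    "\<And>\<alpha>. \<alpha> \<in> cw p \<Longrightarrow> 0 < ceps p \<alpha>"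
    "\<And>\<alpha>. \<alpha> \<in> cw p \<Longrightarrow> ceps p \<alpha> < 1"
    "\<And>\<alpha>. \<alpha> \<in> cw p \<Longrightarrow> finite (dom (cf p \<alpha>))"
    "\<And>\<alpha>. \<alpha> \<in> cw p \<Longrightarrow> ran (cf p \<alpha>) \<subseteq> cu p"
    "\<And>\<alpha> i. \<alpha> \<in> cw p \<Longrightarrow> i \<in> dom (cf p \<alpha>) \<Longrightarrow> the (cf p \<alpha> i) \<in> Apart \<alpha> i"
    "\<And>\<alpha>. \<alpha> \<in> cw p \<Longrightarrow> bi_lipschitz (1 + real_of_rat (ceps p \<alpha>)) (dd \<alpha>)
           (\<lambda>x y. real_of_rat (cd p x y)) (cf p \<alpha>)"
  using assms unfolding is_cond_def by blast+

lemma is_cond_dom_cw: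
  assumes "is_cond Apart dd p" "a \<in> dom (cf p \<alpha>)"
  shows "\<alpha> \<in> cw p"
  using assms is_condD(5)[OF assms(1)] by fastforce

lemma is_cond_value_in_cu:
  assumes "is_cond Apart dd p" "cf p \<alpha> a = Some x"
  shows "x \<in> cu p"
proof -
  have a: "a \<in> dom (cf p \<alpha>)" using assms(2) by blast
  show ?thesis using is_condD(10)[OF assms(1) is_cond_dom_cw[OF assms(1) a]] assms(2) by (auto simp: ran_def)
qed

lemma is_cond_value_in_Apart:
  assumes "is_cond Apart dd p" "cf p \<alpha> a = Some x"
  shows "x \<in> Apart \<alpha> a"
proof -
  have a: "a \<in> dom (cf p \<alpha>)" using assms(2) by blast
  show ?thesis using is_condD(11)[OF assms(1) is_cond_dom_cw[OF assms(1) a] a] assms(2) by simp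
qed

lemma is_cond_ran_in_Union_Apart: "is_cond Apart dd p \<Longrightarrow> x \<in> ran (cf p \<alpha>) \<Longrightarrow> x \<in> (\<Union>i. Apart \<alpha> i)"
  by (auto simp: ran_def dest: is_cond_value_in_Apart)

definition overlaps :: "('k \<Rightarrow> 'w set) \<Rightarrow> 'k set \<Rightarrow> 'w set" where
  "overlaps A R = (\<Union>\<alpha>\<in>R. \<Union>\<beta>\<in>R - {\<alpha>}. A \<alpha> \<inter> A \<beta>)"

lemma finite_overlaps: "finite R \<Longrightarrow> (\<And>\<alpha> \<beta>. \<alpha> \<noteq> \<beta> \<Longrightarrow> finite (A \<alpha> \<inter> A \<beta>)) \<Longrightarrow> finite (overlaps A R)"
  unfolding overlaps_def by (intro finite_UN_I finite_Diff) auto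

lemma cond_ran_unique_off_overlaps:
  assumes "is_cond Apart dd p" "\<And>\<alpha>. A \<alpha> = (\<Union>i. Apart \<alpha> i)" "x \<notin> overlaps A R"
    "\<alpha> \<in> R" "\<beta> \<in> R" "x \<in> ran (cf p \<alpha>)" "x \<in> ran (cf p \<beta>)"
  shows "\<alpha> = \<beta>"
proof (rule ccontr)
  assume "\<alpha> \<noteq> \<beta>"
  moreover have "x \<in> A \<alpha> \<inter> A \<beta>" using is_cond_ran_in_Union_Apart[OF assms(1)] assms(2,6,7) by blast
  ultimately show False using assms(3-5) unfolding overlaps_def by blast
qed

definition cond_dom_pairs :: "('k, 'w) cond \<Rightarrow> ('k \<times> 'w) set" where
  "cond_dom_pairs p = Sigma (cw p) (\<lambda>\<alpha>. dom (cf p \<alpha>))"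

lemma finite_cond_dom_pairs: "is_cond Apart dd p \<Longrightarrow> finite (cond_dom_pairs p)"
  unfolding cond_dom_pairs_def using is_condD(1,9) by (intro finite_SigmaI) auto

lemma cond_preimage:
  assumes "is_cond Apart dd p" "cf p \<alpha> a = Some x"
  shows "(SOME a'. cf p \<alpha> a' = Some x) = a"
proof -
  have "cf p \<alpha> (SOME a'. cf p \<alpha> a' = Some x) = Some x" using someI[of "\<lambda>a'. cf p \<alpha> a' = Some x"] assms(2) .
  with bi_lipschitz_inj[OF is_condD(12)[OF assms(1) is_cond_dom_cw[OF assms(1)]]] assms(2) show ?thesis
    by blast
qed

definition preimage_approx :: "('w \<Rightarrow> 'w \<Rightarrow> real) \<Rightarrow> real \<Rightarrow> ('w \<rightharpoonup> 'w) \<Rightarrow> 'w \<Rightarrow> 'w option" where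
  "preimage_approx d e f x = (if x \<in> ran f then Some (dense_approx d e (SOME a. f a = Some x)) else None)"

lemma preimage_approx_eq_None_iff: "preimage_approx d e f x = None \<longleftrightarrow> x \<notin> ran f"
  by (simp add: preimage_approx_def)

lemma preimage_approx_in_dense_subset:
  "separable_metric d \<Longrightarrow> 0 < e \<Longrightarrow> preimage_approx d e f x \<in> insert None (Some ` dense_subset d)"
  by (simp add: preimage_approx_def dense_approx(1))

lemma cond_preimage_approx:
  assumes "is_cond Apart dd p" "cf p \<alpha> a = Some x"
  shows "preimage_approx d e (cf p \<alpha>) x = Some (dense_approx d e a)"
  using cond_preimage[OF assms] assms(2) by (auto simp: preimage_approx_def ran_def)

lemma pos_rat_below_finite:
  fixes X :: "real set"
  assumes "finite X" "\<And>x. x \<in> X \<Longrightarrow> 0 < x"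
  obtains k :: rat where "0 < k" "\<forall>x\<in>X. of_rat k < x"
proof -
  obtain m :: real where m: "0 < m" "\<And>x. x \<in> X \<Longrightarrow> m \<le> x"
  proof (cases "X = {}")
    case False
    then show thesis using assms by (intro that[of "Min X"]) auto
  qed (auto intro: that[of 1])
  obtain k :: rat where "(0::real) < of_rat k" "of_rat k < m"
    using of_rat_dense[OF m(1)] by blast
  with m(2) show thesis by (intro that[of k]) (auto simp: zero_less_of_rat_iff intro: less_le_trans)
qed

definition cond_margin :: "('k \<Rightarrow> 'w \<Rightarrow> 'w \<Rightarrow> real) \<Rightarrow> ('k, 'w) cond \<Rightarrow> rat \<Rightarrow> bool" where
  "cond_margin dd p \<kappa> \<longleftrightarrow> 0 < \<kappa> \<and>
     (\<forall>s\<in>cu p. \<forall>t\<in>cu p. s \<noteq> t \<longrightarrow> \<kappa> \<le> cd p s t) \<and>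
     (\<forall>\<alpha>\<in>cw p. \<forall>a a' x x'. cf p \<alpha> a = Some x \<longrightarrow> cf p \<alpha> a' = Some x' \<longrightarrow> a \<noteq> a' \<longrightarrow>
        of_rat \<kappa> < (1 + of_rat (ceps p \<alpha>)) * dd \<alpha> a a' - of_rat (cd p x x') \<and>
        of_rat \<kappa> < (1 + of_rat (ceps p \<alpha>)) * of_rat (cd p x x') - dd \<alpha> a a')"

lemma cond_marginD:
  assumes "cond_margin dd p \<kappa>"
  shows "0 < \<kappa>" "\<And>s t. s \<in> cu p \<Longrightarrow> t \<in> cu p \<Longrightarrow> s \<noteq> t \<Longrightarrow> \<kappa> \<le> cd p s t"
    and "\<And>\<alpha> a a' x x'. \<alpha> \<in> cw p \<Longrightarrow> cf p \<alpha> a = Some x \<Longrightarrow> cf p \<alpha> a' = Some x' \<Longrightarrow> a \<noteq> a' \<Longrightarrow>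
      of_rat \<kappa> < (1 + of_rat (ceps p \<alpha>)) * dd \<alpha> a a' - of_rat (cd p x x') \<and>
      of_rat \<kappa> < (1 + of_rat (ceps p \<alpha>)) * of_rat (cd p x x') - dd \<alpha> a a'"
  using assms unfolding cond_margin_def by blast+

lemma cond_margin_exists:
  assumes cp: "is_cond Apart dd p"
  obtains \<kappa> where "cond_margin dd p \<kappa>"
proof -
  define Pairs where "Pairs = {(s, t). s \<in> cu p \<and> t \<in> cu p \<and> s \<noteq> t}"
  define Triples where "Triples = {(\<alpha>, a, a'). \<alpha> \<in> cw p \<and> a \<in> dom (cf p \<alpha>) \<and> a' \<in> dom (cf p \<alpha>) \<and> a \<noteq> a'}"
  define slack where "slack = (\<lambda>(\<alpha>, a, a').
      min ((1 + of_rat (ceps p \<alpha>)) * dd \<alpha> a a' - of_rat (cd p (the (cf p \<alpha> a)) (the (cf p \<alpha> a'))))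
          ((1 + of_rat (ceps p \<alpha>)) * of_rat (cd p (the (cf p \<alpha> a)) (the (cf p \<alpha> a'))) - dd \<alpha> a a'))"
  let ?gaps = "(\<lambda>(s, t). real_of_rat (cd p s t)) ` Pairs \<union> slack ` Triples"
  have "finite Pairs"
    by (rule finite_subset[of _ "cu p \<times> cu p"]) (use is_condD(2)[OF cp] in \<open>auto simp: Pairs_def\<close>)
  moreover have "finite Triples"
    by (rule finite_subset[of _ "Sigma (cw p) (\<lambda>\<alpha>. dom (cf p \<alpha>) \<times> dom (cf p \<alpha>))"])
      (use is_condD(1,9)[OF cp] in \<open>auto simp: Triples_def\<close>)
  moreover have "0 < real_of_rat (cd p s t)" if "(s, t) \<in> Pairs" for s t
    using that metric_onD(1,2)[OF is_condD(3)[OF cp]] by (fastforce simp: Pairs_def order_le_less)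
  moreover have "0 < slack (\<alpha>, a, a')" if "(\<alpha>, a, a') \<in> Triples" for \<alpha> a a'
    using that bi_lipschitzD[OF is_condD(12)[OF cp]] by (simp add: Triples_def slack_def)
  ultimately have "finite ?gaps" "\<And>g. g \<in> ?gaps \<Longrightarrow> 0 < g" by auto
  then obtain \<kappa> :: rat where "0 < \<kappa>" and below: "\<forall>g\<in>?gaps. of_rat \<kappa> < g"
    by (rule pos_rat_below_finite)
  have "cond_margin dd p \<kappa>"
    unfolding cond_margin_def
  proof (intro conjI ballI impI allI)
    fix s t assume "s \<in> cu p" "t \<in> cu p" "s \<noteq> t"
    then have "of_rat \<kappa> < real_of_rat (cd p s t)" using below by (force simp: Pairs_def)
    then show "\<kappa> \<le> cd p s t" by (simp add: of_rat_less)
  next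
    fix \<alpha> a a' x x' assume "\<alpha> \<in> cw p" "cf p \<alpha> a = Some x" "cf p \<alpha> a' = Some x'" "a \<noteq> a'"
    moreover from this have "of_rat \<kappa> < slack (\<alpha>, a, a')" using below by (force simp: Triples_def)
    ultimately show "of_rat \<kappa> < (1 + of_rat (ceps p \<alpha>)) * dd \<alpha> a a' - of_rat (cd p x x')"
      and "of_rat \<kappa> < (1 + of_rat (ceps p \<alpha>)) * of_rat (cd p x x') - dd \<alpha> a a'"
      by (simp_all add: slack_def)
  qed (fact \<open>0 < \<kappa>\<close>)
  then show thesis by (rule that)
qed

definition margin_of :: "('k \<Rightarrow> 'w \<Rightarrow> 'w \<Rightarrow> real) \<Rightarrow> ('k, 'w) cond \<Rightarrow> rat" where
  "margin_of dd p = (SOME \<kappa>. cond_margin dd p \<kappa>)"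

lemma cond_margin_margin_of: "is_cond Apart dd p \<Longrightarrow> cond_margin dd p (margin_of dd p)"
  unfolding margin_of_def by (rule someI_ex) (metis cond_margin_exists)

section \<open>Amalgamation\<close>

locale amalgamation =
  fixes Apart :: "'k \<Rightarrow> 'w \<Rightarrow> 'w set" and dd :: "'k \<Rightarrow> 'w \<Rightarrow> 'w \<Rightarrow> real"
    and p q :: "('k, 'w) cond" and \<sigma> :: "'w \<Rightarrow> 'w" and \<kappa> :: rat
  assumes cond_p: "is_cond Apart dd p" and cond_q: "is_cond Apart dd q"
    and Apart_disjoint: "\<And>\<alpha> i j. i \<noteq> j \<Longrightarrow> Apart \<alpha> i \<inter> Apart \<alpha> j = {}"
    and dd_metric: "\<And>\<alpha>. metric_on UNIV (dd \<alpha>)"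
    and \<sigma>_bij: "bij_betw \<sigma> (cu p) (cu q)"
    and \<sigma>_common: "\<And>x. x \<in> cu p \<inter> cu q \<Longrightarrow> \<sigma> x = x"
    and \<sigma>_isometry: "\<And>x y. x \<in> cu p \<Longrightarrow> y \<in> cu p \<Longrightarrow> cd q (\<sigma> x) (\<sigma> y) = cd p x y"
    and ceps_common: "\<And>\<alpha>. \<alpha> \<in> cw p \<inter> cw q \<Longrightarrow> ceps q \<alpha> = ceps p \<alpha>"
    and cf_common: "\<And>\<alpha> a x y. \<alpha> \<in> cw p \<inter> cw q \<Longrightarrow> cf p \<alpha> a = Some x \<Longrightarrow> cf q \<alpha> a = Some y \<Longrightarrow> x = y"
    and ran_\<sigma>: "\<And>\<alpha> x. \<alpha> \<in> cw p \<inter> cw q \<Longrightarrow> x \<in> cu p \<Longrightarrow> x \<in> ran (cf p \<alpha>) \<longleftrightarrow> \<sigma> x \<in> ran (cf q \<alpha>)"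
    and margin: "cond_margin dd p \<kappa>"
    and preimages_close: "\<And>\<alpha> a b x. \<alpha> \<in> cw p \<inter> cw q \<Longrightarrow> cf p \<alpha> a = Some x \<Longrightarrow> cf q \<alpha> b = Some (\<sigma> x) \<Longrightarrow>
       dd \<alpha> a b < of_rat \<kappa> / 2"
    and ran_new_unique: "\<And>x \<alpha> \<beta>. x \<in> cu p - cu q \<Longrightarrow> \<alpha> \<in> cw p \<inter> cw q \<Longrightarrow> \<beta> \<in> cw p \<inter> cw q \<Longrightarrow>
       x \<in> ran (cf p \<alpha>) \<Longrightarrow> x \<in> ran (cf p \<beta>) \<Longrightarrow> \<alpha> = \<beta>"
begin

lemma \<sigma>_in: "x \<in> cu p \<Longrightarrow> \<sigma> x \<in> cu q"
  using \<sigma>_bij bij_betwE by blast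

lemma \<sigma>_eq_self_iff: "x \<in> cu p \<Longrightarrow> \<sigma> x = x \<longleftrightarrow> x \<in> cu q"
  using \<sigma>_common \<sigma>_in by force

definition pull :: "'w \<Rightarrow> 'w" where
  "pull z = (if z \<in> cu p then z else inv_into (cu p) \<sigma> z)"

lemma pull_cu_p: "z \<in> cu p \<Longrightarrow> pull z = z"
  by (simp add: pull_def)

lemma pull_in_cu_p: "z \<in> cu p \<union> cu q \<Longrightarrow> pull z \<in> cu p"
  using \<sigma>_bij by (auto simp: pull_def bij_betw_def inv_into_into)

lemma \<sigma>_pull: "z \<in> cu q \<Longrightarrow> \<sigma> (pull z) = z"
  using \<sigma>_bij \<sigma>_common by (auto simp: pull_def bij_betw_inv_into_right)

lemma pull_cases: "z \<in> cu p \<union> cu q \<Longrightarrow> z = pull z \<or> z = \<sigma> (pull z)"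
  using pull_cu_p \<sigma>_pull by auto

lemma pull_eq_twins:
  assumes "x \<in> cu p \<union> cu q" "y \<in> cu p \<union> cu q" "x \<noteq> y" "pull x = pull y"
  shows "pull x \<in> cu p - cu q" "{x, y} = {pull x, \<sigma> (pull x)}"
proof -
  have "pull x \<notin> cu q"
  proof
    assume "pull x \<in> cu q"
    then have "\<sigma> (pull x) = pull x" using \<sigma>_common pull_in_cu_p[OF assms(1)] by blast
    then show False using pull_cases[OF assms(1)] pull_cases[OF assms(2)] assms(3,4) by metis
  qed
  then show "pull x \<in> cu p - cu q" using pull_in_cu_p[OF assms(1)] by blast
  show "{x, y} = {pull x, \<sigma> (pull x)}"
    using pull_cases[OF assms(1)] pull_cases[OF assms(2)] assms(3,4) by auto
qed

abbreviation lip :: "'k \<Rightarrow> real" where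
  "lip \<alpha> \<equiv> 1 + real_of_rat (ceps p \<alpha>)"

lemma lip_bounds: "\<alpha> \<in> cw p \<Longrightarrow> 1 < lip \<alpha> \<and> lip \<alpha> < 2"
  using is_condD(7,8)[OF cond_p] by (simp add: zero_less_of_rat_iff of_rat_less_1_iff)

lemma bi_lipschitz_p: "\<alpha> \<in> cw p \<Longrightarrow> bi_lipschitz (lip \<alpha>) (dd \<alpha>) (\<lambda>x y. of_rat (cd p x y)) (cf p \<alpha>)"
  by (rule is_condD(12)[OF cond_p])

lemma bi_lipschitz_q: "\<alpha> \<in> cw p \<inter> cw q \<Longrightarrow> bi_lipschitz (lip \<alpha>) (dd \<alpha>) (\<lambda>x y. of_rat (cd q x y)) (cf q \<alpha>)"
  using is_condD(12)[OF cond_q, of \<alpha>] ceps_common[of \<alpha>] by simp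

lemma twin_witness_unique:
  assumes x: "x \<in> cu p - cu q" and \<alpha>: "\<alpha> \<in> cw p \<inter> cw q" and \<beta>: "\<beta> \<in> cw p \<inter> cw q"
    and a: "cf p \<alpha> a = Some x" and b: "cf q \<alpha> b = Some (\<sigma> x)"
    and a': "cf p \<beta> a' = Some x" and b': "cf q \<beta> b' = Some (\<sigma> x)"
  shows "\<beta> = \<alpha>" "a' = a" "b' = b"
proof -
  show "\<beta> = \<alpha>" using ran_new_unique[OF x \<beta> \<alpha>] a a' by (auto simp: ran_def)
  then show "a' = a" "b' = b"
    using bi_lipschitz_inj[OF bi_lipschitz_p] bi_lipschitz_inj[OF bi_lipschitz_q[OF \<alpha>]] \<alpha> a b a' b'
    by blast+
qed

text \<open>By \<open>ran_new_unique\<close>, at most one root map constrains the twin distance of \<open>x\<close>.\<close>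
definition twin_ok :: "'w \<Rightarrow> rat \<Rightarrow> bool" where
  "twin_ok x c \<longleftrightarrow> 0 < c \<and> c \<le> \<kappa> \<and>
     (\<forall>\<alpha>\<in>cw p \<inter> cw q. \<forall>a b. cf p \<alpha> a = Some x \<longrightarrow> cf q \<alpha> b = Some (\<sigma> x) \<longrightarrow>
        dd \<alpha> a b < lip \<alpha> * of_rat c \<and> of_rat c < lip \<alpha> * dd \<alpha> a b)"

definition twin_dist :: "'w \<Rightarrow> rat" where
  "twin_dist x = (SOME c. twin_ok x c)"

lemma twin_ok_exists:
  assumes x: "x \<in> cu p - cu q"
  shows "\<exists>c. twin_ok x c"
proof (cases "\<exists>\<alpha>\<in>cw p \<inter> cw q. \<exists>a b. cf p \<alpha> a = Some x \<and> cf q \<alpha> b = Some (\<sigma> x)")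
  case False
  then have "twin_ok x \<kappa>" using cond_marginD(1)[OF margin] by (auto simp: twin_ok_def)
  then show ?thesis ..
next
  case True
  then obtain \<alpha> a b where \<alpha>: "\<alpha> \<in> cw p \<inter> cw q" and a: "cf p \<alpha> a = Some x"
    and b: "cf q \<alpha> b = Some (\<sigma> x)" by blast
  have "a \<noteq> b"
  proof
    assume "a = b"
    then have "\<sigma> x = x" using cf_common[OF \<alpha> a] b by simp
    with x \<sigma>_eq_self_iff show False by blast
  qed
  define t where "t = dd \<alpha> a b"
  have t: "0 < t" "t < of_rat \<kappa> / 2"
    using metric_on_UNIV_pos[OF dd_metric \<open>a \<noteq> b\<close>] preimages_close[OF \<alpha> a b] by (simp_all add: t_def)
  have lip: "1 < lip \<alpha>" "lip \<alpha> < 2" using lip_bounds \<alpha> by auto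
  then obtain c :: rat where c: "t < of_rat c" "of_rat c < lip \<alpha> * t"
    using of_rat_dense[of t "lip \<alpha> * t"] t(1) by auto
  have "lip \<alpha> * t < 2 * t" using lip t(1) by simp
  then have "(0::real) < of_rat c" "of_rat c \<le> (of_rat \<kappa> :: real)" using c t by linarith+
  then have "0 < c" "c \<le> \<kappa>" by (simp_all add: zero_less_of_rat_iff of_rat_less_eq)
  moreover have "t < lip \<alpha> * of_rat c"
    using c lip t(1) by (smt (verit) mult_less_cancel_right1)
  ultimately have "twin_ok x c"
    using c twin_witness_unique[OF x _ \<alpha> _ _ a b] \<alpha> unfolding twin_ok_def t_def by metis
  then show ?thesis ..
qed

lemma twin_ok_twin_dist: "x \<in> cu p - cu q \<Longrightarrow> twin_ok x (twin_dist x)"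
  unfolding twin_dist_def by (rule someI_ex) (rule twin_ok_exists)

text \<open>Every point of \<open>cu q\<close> is identified with its \<open>\<sigma>\<close>-preimage in \<open>cu p\<close>, except that twins are
  kept apart at their twin distance.\<close>
definition amalg_dist :: "'w \<Rightarrow> 'w \<Rightarrow> rat" where
  "amalg_dist x y = (if x \<noteq> y \<and> pull x = pull y then twin_dist (pull x) else cd p (pull x) (pull y))"

lemma amalg_dist_cu_p: "x \<in> cu p \<Longrightarrow> y \<in> cu p \<Longrightarrow> amalg_dist x y = cd p x y"
  by (simp add: amalg_dist_def pull_cu_p)

lemma amalg_dist_cu_q:
  assumes "x \<in> cu q" "y \<in> cu q"
  shows "amalg_dist x y = cd q x y"
proof (cases "x = y")
  case True
  have "pull y \<in> cu p" using assms pull_in_cu_p by blast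
  then show ?thesis
    using True assms metric_onD(2)[OF is_condD(3)[OF cond_p], of "pull y" "pull y"]
      metric_onD(2)[OF is_condD(3)[OF cond_q], of y y] by (simp add: amalg_dist_def)
next
  case False
  then have "pull x \<noteq> pull y" using \<sigma>_pull assms by metis
  moreover have "cd q x y = cd p (pull x) (pull y)"
    using \<sigma>_isometry[OF pull_in_cu_p pull_in_cu_p, of x y] \<sigma>_pull assms by simp
  ultimately show ?thesis by (simp add: amalg_dist_def)
qed

lemma amalg_dist_twins:
  assumes "x \<in> cu p \<union> cu q" "y \<in> cu p \<union> cu q" "x \<noteq> y" "pull x = pull y"
  shows "amalg_dist x y = twin_dist (pull x)" "0 < twin_dist (pull x)" "twin_dist (pull x) \<le> \<kappa>"
  using twin_ok_twin_dist[OF pull_eq_twins(1)[OF assms]] assms(3,4) by (simp_all add: amalg_dist_def twin_ok_def)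

lemma amalg_dist_ge_pull:
  assumes "x \<in> cu p \<union> cu q" "y \<in> cu p \<union> cu q"
  shows "cd p (pull x) (pull y) \<le> amalg_dist x y"
proof (cases "x \<noteq> y \<and> pull x = pull y")
  case True
  then show ?thesis
    using amalg_dist_twins[OF assms] metric_onD(2)[OF is_condD(3)[OF cond_p]] pull_in_cu_p[OF assms(1)]
    by force
qed (auto simp: amalg_dist_def)

lemma amalg_dist_triangle:
  assumes xyz: "x \<in> cu p \<union> cu q" "y \<in> cu p \<union> cu q" "z \<in> cu p \<union> cu q"
  shows "amalg_dist x z \<le> amalg_dist x y + amalg_dist y z"
proof (cases "x \<noteq> z \<and> pull x = pull z")
  case twin: True
  \<comment> \<open>twins are at distance at most \<open>\<kappa>\<close>, all other distinct pairs at least \<open>\<kappa>\<close>\<close>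
  have nonneg: "0 \<le> amalg_dist u v" if "u \<in> cu p \<union> cu q" "v \<in> cu p \<union> cu q" for u v
    using amalg_dist_ge_pull[OF that] metric_onD(1)[OF is_condD(3)[OF cond_p] pull_in_cu_p pull_in_cu_p] that
    by (meson order_trans)
  show ?thesis
  proof (cases "y = x \<or> y = z")
    case True
    then show ?thesis using nonneg xyz by auto
  next
    case False
    with pull_eq_twins(2)[of x z] twin xyz have "pull y \<noteq> pull x"
      using pull_eq_twins(2)[of x y] by (metis doubleton_eq_iff insert_iff)
    then have "\<kappa> \<le> amalg_dist x y"
      using cond_marginD(2)[OF margin] pull_in_cu_p xyz by (auto simp: amalg_dist_def)
    moreover have "amalg_dist x z \<le> \<kappa>" using amalg_dist_twins[OF xyz(1,3)] twin by simp
    ultimately show ?thesis using nonneg[OF xyz(2,3)] by linarith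
  qed
next
  case False
  then have "amalg_dist x z = cd p (pull x) (pull z)" by (auto simp: amalg_dist_def)
  also have "\<dots> \<le> cd p (pull x) (pull y) + cd p (pull y) (pull z)"
    using metric_onD(4)[OF is_condD(3)[OF cond_p]] pull_in_cu_p xyz by blast
  also have "\<dots> \<le> amalg_dist x y + amalg_dist y z"
    using amalg_dist_ge_pull xyz by (intro add_mono) auto
  finally show ?thesis .
qed

lemma metric_on_amalg_dist: "metric_on (cu p \<union> cu q) amalg_dist"
  unfolding metric_on_def
proof (intro conjI ballI)
  fix x y assume xy: "x \<in> cu p \<union> cu q" "y \<in> cu p \<union> cu q"
  note pmetric = metric_onD[OF is_condD(3)[OF cond_p] pull_in_cu_p[OF xy(1)] pull_in_cu_p[OF xy(2)]]
  show "0 \<le> amalg_dist x y" using amalg_dist_ge_pull[OF xy] pmetric(1) by linarith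
  show "amalg_dist x y = amalg_dist y x" using pmetric(3) by (auto simp: amalg_dist_def)
  show "amalg_dist x y = 0 \<longleftrightarrow> x = y"
    using amalg_dist_twins[OF xy] pmetric(2) by (auto simp: amalg_dist_def)
next
  fix x y z assume "x \<in> cu p \<union> cu q" "y \<in> cu p \<union> cu q" "z \<in> cu p \<union> cu q"
  then show "amalg_dist x z \<le> amalg_dist x y + amalg_dist y z" by (rule amalg_dist_triangle)
qed

text \<open>This is what the margin is for: replacing \<open>a'\<close> by a point \<open>b\<close> less than \<open>\<kappa> / 2\<close> away keeps
  the bi-Lipschitz inequalities of \<open>p\<close> strict.\<close>
lemma cd_p_bounds_perturbed:
  assumes \<alpha>: "\<alpha> \<in> cw p" and a: "cf p \<alpha> a = Some x" and a': "cf p \<alpha> a' = Some x'" and "a \<noteq> a'"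
    and close: "dd \<alpha> a' b < of_rat \<kappa> / 2"
  shows "of_rat (cd p x x') < lip \<alpha> * dd \<alpha> a b \<and> dd \<alpha> a b < lip \<alpha> * of_rat (cd p x x')"
proof -
  have slack: "of_rat \<kappa> < lip \<alpha> * dd \<alpha> a a' - of_rat (cd p x x')"
    "of_rat \<kappa> < lip \<alpha> * of_rat (cd p x x') - dd \<alpha> a a'"
    using cond_marginD(3)[OF margin \<alpha> a a' \<open>a \<noteq> a'\<close>] by auto
  have tri: "dd \<alpha> a a' \<le> dd \<alpha> a b + dd \<alpha> a' b" "dd \<alpha> a b \<le> dd \<alpha> a a' + dd \<alpha> a' b"
    using metric_onD(3,4)[OF dd_metric] by (metis UNIV_I)+
  have "0 \<le> dd \<alpha> a' b" using metric_onD(1)[OF dd_metric] by blast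
  moreover have lip: "0 \<le> lip \<alpha>" "lip \<alpha> \<le> 2" using lip_bounds[OF \<alpha>] by auto
  ultimately have "lip \<alpha> * dd \<alpha> a' b \<le> 2 * dd \<alpha> a' b" by (intro mult_right_mono)
  moreover have "lip \<alpha> * dd \<alpha> a a' \<le> lip \<alpha> * dd \<alpha> a b + lip \<alpha> * dd \<alpha> a' b"
    using mult_left_mono[OF tri(1) lip(1)] by (simp add: distrib_left)
  moreover have "0 < real_of_rat \<kappa>" using cond_marginD(1)[OF margin] by (simp add: zero_less_of_rat_iff)
  ultimately have "of_rat (cd p x x') < lip \<alpha> * dd \<alpha> a b" "dd \<alpha> a b < lip \<alpha> * of_rat (cd p x x')"
    using slack tri(2) close by linarith+
  then show ?thesis ..
qed

lemma amalg_dist_cross: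
  assumes \<alpha>: "\<alpha> \<in> cw p \<inter> cw q" and a: "cf p \<alpha> a = Some x" and b: "cf q \<alpha> b = Some y" and "a \<noteq> b"
  shows "of_rat (amalg_dist x y) < lip \<alpha> * dd \<alpha> a b \<and> dd \<alpha> a b < lip \<alpha> * of_rat (amalg_dist x y)"
proof -
  have x: "x \<in> cu p" and y: "y \<in> cu q"
    using is_cond_value_in_cu[OF cond_p a] is_cond_value_in_cu[OF cond_q b] .
  have "x \<noteq> y"
    using Apart_disjoint[OF \<open>a \<noteq> b\<close>] is_cond_value_in_Apart[OF cond_p a] is_cond_value_in_Apart[OF cond_q b]
    by blast
  define y' where "y' = pull y"
  have y': "y' \<in> cu p" "\<sigma> y' = y" using pull_in_cu_p \<sigma>_pull y by (auto simp: y'_def)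
  then have "y' \<in> ran (cf p \<alpha>)" using ran_\<sigma>[OF \<alpha>] b by (auto simp: ran_def)
  then obtain a' where a': "cf p \<alpha> a' = Some y'" by (auto simp: ran_def)
  show ?thesis
  proof (cases "a' = a")
    case True
    then have "x = y'" using a a' by simp
    then have "x \<in> cu p - cu q" using \<sigma>_eq_self_iff[OF x] y'(2) \<open>x \<noteq> y\<close> x by (metis DiffI)
    moreover have "amalg_dist x y = twin_dist x"
      using amalg_dist_twins(1)[of x y] x y \<open>x \<noteq> y\<close> \<open>x = y'\<close> pull_cu_p by (simp add: y'_def)
    ultimately show ?thesis
      using twin_ok_twin_dist \<alpha> a b y' \<open>x = y'\<close> unfolding twin_ok_def by auto
  next
    case False
    then have "x \<noteq> y'" using bi_lipschitz_inj[OF bi_lipschitz_p] \<alpha> a a' by blast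
    then have "amalg_dist x y = cd p x y'" by (simp add: amalg_dist_def pull_cu_p x y'_def)
    moreover have "dd \<alpha> a' b < of_rat \<kappa> / 2" using preimages_close[OF \<alpha> a'] b y' by simp
    ultimately show ?thesis using cd_p_bounds_perturbed[OF _ a a'] \<alpha> False by auto
  qed
qed

definition amalgam :: "('k, 'w) cond" where
  "amalgam = \<lparr>cw = cw p \<union> cw q, cu = cu p \<union> cu q,
     cd = (\<lambda>x y. if x \<in> cu p \<union> cu q \<and> y \<in> cu p \<union> cu q then amalg_dist x y else 0),
     cf = (\<lambda>\<alpha>. cf p \<alpha> ++ cf q \<alpha>),
     ceps = (\<lambda>\<alpha>. if \<alpha> \<in> cw p then ceps p \<alpha> else ceps q \<alpha>)\<rparr>"

lemma amalgam_simps: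
  "cw amalgam = cw p \<union> cw q" "cu amalgam = cu p \<union> cu q"
  "cd amalgam x y = (if x \<in> cu p \<union> cu q \<and> y \<in> cu p \<union> cu q then amalg_dist x y else 0)"
  "cf amalgam \<alpha> = cf p \<alpha> ++ cf q \<alpha>"
  "ceps amalgam \<alpha> = (if \<alpha> \<in> cw p then ceps p \<alpha> else ceps q \<alpha>)"
  by (simp_all add: amalgam_def)

lemma cd_amalgam_p: "x \<in> cu p \<Longrightarrow> y \<in> cu p \<Longrightarrow> cd amalgam x y = cd p x y"
  by (simp add: amalgam_simps amalg_dist_cu_p)

lemma cd_amalgam_q: "x \<in> cu q \<Longrightarrow> y \<in> cu q \<Longrightarrow> cd amalgam x y = cd q x y"
  by (simp add: amalgam_simps amalg_dist_cu_q)

lemma cf_amalgam_q: "cf q \<alpha> a = Some y \<Longrightarrow> cf amalgam \<alpha> a = Some y"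
  by (simp add: amalgam_simps)

lemma cf_amalgam_p:
  assumes a: "cf p \<alpha> a = Some x"
  shows "cf amalgam \<alpha> a = Some x"
proof (cases "cf q \<alpha> a")
  case (Some y)
  then have "\<alpha> \<in> cw p \<inter> cw q" using is_cond_dom_cw[OF cond_p] is_cond_dom_cw[OF cond_q] a by blast
  with a Some show ?thesis using cf_common[of \<alpha> a x y] by (simp add: amalgam_simps)
qed (simp add: amalgam_simps map_add_def a)

lemma cf_amalgam_cases: "cf amalgam \<alpha> a = Some z \<Longrightarrow> cf p \<alpha> a = Some z \<or> cf q \<alpha> a = Some z"
  by (auto simp: amalgam_simps dest: map_add_SomeD)

lemma amalgam_pair_bounds:
  assumes \<alpha>: "\<alpha> \<in> cw p \<inter> cw q" and a: "cf amalgam \<alpha> a = Some x" and b: "cf amalgam \<alpha> b = Some y"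
    and "a \<noteq> b"
  shows "of_rat (cd amalgam x y) < lip \<alpha> * dd \<alpha> a b \<and> dd \<alpha> a b < lip \<alpha> * of_rat (cd amalgam x y)"
proof -
  have cross: "of_rat (cd amalgam x' y') < lip \<alpha> * dd \<alpha> a' b' \<and> dd \<alpha> a' b' < lip \<alpha> * of_rat (cd amalgam x' y')"
    if "cf p \<alpha> a' = Some x'" "cf q \<alpha> b' = Some y'" "a' \<noteq> b'" for a' b' x' y'
    using amalg_dist_cross[OF \<alpha> that] is_cond_value_in_cu[OF cond_p that(1)] is_cond_value_in_cu[OF cond_q that(2)]
    by (simp add: amalgam_simps)
  have sym: "cd amalgam y x = cd amalgam x y" "dd \<alpha> b a = dd \<alpha> a b"
    using metric_onD(3)[OF metric_on_amalg_dist] metric_onD(3)[OF dd_metric] by (auto simp: amalgam_simps)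
  consider "cf p \<alpha> a = Some x" "cf p \<alpha> b = Some y" | "cf q \<alpha> a = Some x" "cf q \<alpha> b = Some y"
    | "cf p \<alpha> a = Some x" "cf q \<alpha> b = Some y" | "cf q \<alpha> a = Some x" "cf p \<alpha> b = Some y"
    using cf_amalgam_cases[OF a] cf_amalgam_cases[OF b] by blast
  then show ?thesis
  proof cases
    case 1
    then show ?thesis using bi_lipschitzD[OF bi_lipschitz_p, of \<alpha> a b] \<alpha> \<open>a \<noteq> b\<close>
        cd_amalgam_p[OF is_cond_value_in_cu[OF cond_p 1(1)] is_cond_value_in_cu[OF cond_p 1(2)]]
      by (auto simp: domI)
  next
    case 2
    then show ?thesis using bi_lipschitzD[OF bi_lipschitz_q[OF \<alpha>], of a b] \<open>a \<noteq> b\<close>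
        cd_amalgam_q[OF is_cond_value_in_cu[OF cond_q 2(1)] is_cond_value_in_cu[OF cond_q 2(2)]]
      by (auto simp: domI)
  next
    case 3
    then show ?thesis using cross \<open>a \<noteq> b\<close> by blast
  next
    case 4
    then show ?thesis using cross[of b y a x] \<open>a \<noteq> b\<close> sym by simp
  qed
qed

lemma bi_lipschitz_amalgam:
  assumes "\<alpha> \<in> cw amalgam"
  shows "bi_lipschitz (1 + of_rat (ceps amalgam \<alpha>)) (dd \<alpha>) (\<lambda>x y. of_rat (cd amalgam x y)) (cf amalgam \<alpha>)"
proof -
  consider "\<alpha> \<in> cw p \<inter> cw q" | "\<alpha> \<in> cw p - cw q" | "\<alpha> \<in> cw q - cw p"
    using assms by (auto simp: amalgam_simps)
  then show ?thesis
  proof cases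
    case 1
    have lip: "1 + of_rat (ceps amalgam \<alpha>) = lip \<alpha>" using 1 by (simp add: amalgam_simps)
    show ?thesis unfolding lip
    proof (rule bi_lipschitzI)
      fix a b assume "a \<in> dom (cf amalgam \<alpha>)" "b \<in> dom (cf amalgam \<alpha>)" "a \<noteq> b"
      then show "of_rat (cd amalgam (the (cf amalgam \<alpha> a)) (the (cf amalgam \<alpha> b))) < lip \<alpha> * dd \<alpha> a b \<and>
          dd \<alpha> a b < lip \<alpha> * of_rat (cd amalgam (the (cf amalgam \<alpha> a)) (the (cf amalgam \<alpha> b)))"
        using amalgam_pair_bounds[OF 1] by auto
    next
      show "\<And>a b. a \<noteq> b \<Longrightarrow> 0 < dd \<alpha> a b" by (rule metric_on_UNIV_pos[OF dd_metric])
      show "\<And>x. real_of_rat (cd amalgam x x) = 0"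
        using metric_onD(2)[OF metric_on_amalg_dist] by (simp add: amalgam_simps)
    qed
  next
    case 2
    then have "cf amalgam \<alpha> = cf p \<alpha>" "ceps amalgam \<alpha> = ceps p \<alpha>"
      using is_condD(5)[OF cond_q] by (simp_all add: amalgam_simps)
    moreover have "ran (cf p \<alpha>) \<subseteq> cu p" using is_condD(10)[OF cond_p] 2 by blast
    ultimately show ?thesis
      using bi_lipschitz_cong[of "cf p \<alpha>" "\<lambda>x y. of_rat (cd amalgam x y)"] bi_lipschitz_p 2 cd_amalgam_p
      by (simp add: subset_iff)
  next
    case 3
    then have "cf amalgam \<alpha> = cf q \<alpha>" "ceps amalgam \<alpha> = ceps q \<alpha>"
      using is_condD(5)[OF cond_p] by (simp_all add: amalgam_simps)
    moreover have "ran (cf q \<alpha>) \<subseteq> cu q" using is_condD(10)[OF cond_q] 3 by blast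
    ultimately show ?thesis
      using bi_lipschitz_cong[of "cf q \<alpha>" "\<lambda>x y. of_rat (cd amalgam x y)"] is_condD(12)[OF cond_q] 3 cd_amalgam_q
      by (simp add: subset_iff)
  qed
qed

lemma is_cond_amalgam: "is_cond Apart dd amalgam"
  unfolding is_cond_def
proof (intro conjI allI ballI impI)
  show "finite (cw amalgam)" "finite (cu amalgam)"
    using is_condD(1,2)[OF cond_p] is_condD(1,2)[OF cond_q] by (simp_all add: amalgam_simps)
  show "metric_on (cu amalgam) (cd amalgam)"
    using metric_on_amalg_dist unfolding metric_on_def by (simp add: amalgam_simps)
  show "cd amalgam x y = 0" if "x \<notin> cu amalgam \<or> y \<notin> cu amalgam" for x y
    using that by (auto simp: amalgam_simps)
  fix \<alpha>
  show "cf amalgam \<alpha> = Map.empty" "ceps amalgam \<alpha> = 0" if "\<alpha> \<notin> cw amalgam"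
    using that is_condD(5,6)[OF cond_p] is_condD(5,6)[OF cond_q] by (simp_all add: amalgam_simps)
  assume \<alpha>: "\<alpha> \<in> cw amalgam"
  show "0 < ceps amalgam \<alpha>" "ceps amalgam \<alpha> < 1"
    using \<alpha> is_condD(7,8)[OF cond_p] is_condD(7,8)[OF cond_q] by (auto simp: amalgam_simps)
  show "finite (dom (cf amalgam \<alpha>))"
    using is_condD(9)[OF cond_p] is_condD(9)[OF cond_q] is_condD(5)[OF cond_p] is_condD(5)[OF cond_q]
    by (cases "\<alpha> \<in> cw p"; cases "\<alpha> \<in> cw q") (simp_all add: amalgam_simps)
  show "ran (cf amalgam \<alpha>) \<subseteq> cu amalgam"
    using cf_amalgam_cases is_cond_value_in_cu[OF cond_p] is_cond_value_in_cu[OF cond_q]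
    by (fastforce simp: ran_def amalgam_simps(2))
  show "the (cf amalgam \<alpha> i) \<in> Apart \<alpha> i" if "i \<in> dom (cf amalgam \<alpha>)" for i
    using that cf_amalgam_cases is_cond_value_in_Apart[OF cond_p] is_cond_value_in_Apart[OF cond_q] by fastforce
  show "bi_lipschitz (1 + of_rat (ceps amalgam \<alpha>)) (dd \<alpha>) (\<lambda>x y. of_rat (cd amalgam x y)) (cf amalgam \<alpha>)"
    using \<alpha> by (rule bi_lipschitz_amalgam)
qed

lemma cond_le_amalgam: "cond_le p amalgam" "cond_le q amalgam"
  unfolding cond_le_def map_le_def
  using cd_amalgam_p cd_amalgam_q cf_amalgam_p cf_amalgam_q ceps_common
  by (auto simp: amalgam_simps)

theorem compatible: "cond_compatible Apart dd p q"
  unfolding cond_compatible_def using is_cond_amalgam cond_le_amalgam by blast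

end

section \<open>Codes of conditions\<close>

lemma nth_bij_betw_distinct:
  assumes "distinct xs" "distinct ys" "length xs = length ys"
  obtains \<sigma> where "bij_betw \<sigma> (set xs) (set ys)" "\<And>i. i < length xs \<Longrightarrow> \<sigma> (xs ! i) = ys ! i"
proof -
  have bx: "bij_betw ((!) xs) {..<length xs} (set xs)"
    using assms(1) by (rule bij_betw_nth) auto
  have by': "bij_betw ((!) ys) {..<length xs} (set ys)"
    using assms(2) by (rule bij_betw_nth) (use assms(3) in auto)
  let ?\<sigma> = "(!) ys \<circ> inv_into {..<length xs} ((!) xs)"
  have "bij_betw ?\<sigma> (set xs) (set ys)"
    by (rule bij_betw_trans[OF bij_betw_inv_into[OF bx] by'])
  moreover have "?\<sigma> (xs ! i) = ys ! i" if "i < length xs" for i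
    using bij_betw_inv_into_left[OF bx] that by simp
  ultimately show thesis by (rule that)
qed

lemma map_eq_map_nth: "map f xs = map g ys \<Longrightarrow> i < length xs \<Longrightarrow> f (xs ! i) = g (ys ! i)"
  by (metis length_map nth_map)

definition cond_delta_system :: "('k, 'w) cond set \<Rightarrow> 'k set \<Rightarrow> 'w set \<Rightarrow> ('k \<times> 'w) set \<Rightarrow> bool" where
  "cond_delta_system T R U G \<longleftrightarrow> (\<forall>p\<in>T. \<forall>q\<in>T. p \<noteq> q \<longrightarrow>
     cw p \<inter> cw q = R \<and> cu p \<inter> cu q = U \<and> cond_dom_pairs p \<inter> cond_dom_pairs q = G)"

lemma uncountable_conds_delta_system:
  assumes "uncountable S" "\<forall>p\<in>S. is_cond Apart dd p"
  obtains T R U G where "T \<subseteq> S" "uncountable T" "cond_delta_system T R U G"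
proof -
  have fin: "finite (cw p)" "finite (cu p)" "finite (cond_dom_pairs p)" if "p \<in> S" for p
    using assms(2) that is_condD(1,2) finite_cond_dom_pairs by blast+
  obtain T1 R where T1: "T1 \<subseteq> S" "uncountable T1"
    and R: "\<And>p q. p \<in> T1 \<Longrightarrow> q \<in> T1 \<Longrightarrow> p \<noteq> q \<Longrightarrow> cw p \<inter> cw q = R"
    by (rule delta_system_uncountable[OF assms(1), of cw]) (use fin in auto)
  obtain T2 U where T2: "T2 \<subseteq> T1" "uncountable T2"
    and U: "\<And>p q. p \<in> T2 \<Longrightarrow> q \<in> T2 \<Longrightarrow> p \<noteq> q \<Longrightarrow> cu p \<inter> cu q = U"
    by (rule delta_system_uncountable[OF T1(2), of cu]) (use fin T1(1) in auto)
  obtain T3 G where T3: "T3 \<subseteq> T2" "uncountable T3"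
    and G: "\<And>p q. p \<in> T3 \<Longrightarrow> q \<in> T3 \<Longrightarrow> p \<noteq> q \<Longrightarrow> cond_dom_pairs p \<inter> cond_dom_pairs q = G"
    by (rule delta_system_uncountable[OF T2(2), of cond_dom_pairs]) (use fin T1(1) T2(1) in auto)
  have "cond_delta_system T3 R U G"
    unfolding cond_delta_system_def
  proof (intro ballI impI conjI)
    fix p q assume pq: "p \<in> T3" "q \<in> T3" "p \<noteq> q"
    show "cw p \<inter> cw q = R" using R[of p q] pq T2(1) T3(1) by blast
    show "cu p \<inter> cu q = U" using U[of p q] pq T3(1) by blast
    show "cond_dom_pairs p \<inter> cond_dom_pairs q = G" using G[OF pq] .
  qed
  moreover have "T3 \<subseteq> S" using T1(1) T2(1) T3(1) by blast
  ultimately show thesis using that T3(2) by blast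
qed

text \<open>Codes are taken relative to enumerations \<open>rs\<close>, \<open>gs\<close> of the roots and \<open>xs\<close> of \<open>cu p\<close>;
  conditions with equal codes can be amalgamated.\<close>
definition cond_code :: "('k \<Rightarrow> 'w \<Rightarrow> 'w \<Rightarrow> real) \<Rightarrow> 'k list \<Rightarrow> ('k \<times> 'w) list \<Rightarrow> 'w list \<Rightarrow> ('k, 'w) cond \<Rightarrow>
    rat list \<times> 'w option list \<times> rat list list \<times> rat \<times> 'w option list list" where
  "cond_code dd rs gs xs p =
     (map (ceps p) rs,
      map (\<lambda>(\<alpha>, a). cf p \<alpha> a) gs,
      map (\<lambda>x. map (cd p x) xs) xs,
      margin_of dd p,
      map (\<lambda>\<alpha>. map (preimage_approx (dd \<alpha>) (of_rat (margin_of dd p) / 4) (cf p \<alpha>)) xs) rs)"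

lemma countable_cond_codes:
  fixes Apart :: "'k \<Rightarrow> 'w \<Rightarrow> 'w set" and dd :: "'k \<Rightarrow> 'w \<Rightarrow> 'w \<Rightarrow> real"
  assumes "\<And>\<alpha> i. countable (Apart \<alpha> i)" "\<And>\<alpha>. separable_metric (dd \<alpha>)"
  obtains C where "countable C" "\<And>p xs. is_cond Apart dd p \<Longrightarrow> cond_code dd rs gs xs p \<in> C"
proof
  let ?V = "insert None (Some ` (\<Union>g\<in>set gs. Apart (fst g) (snd g)))"
  let ?D = "insert None (Some ` (\<Union>\<alpha>\<in>set rs. dense_subset (dd \<alpha>)))"
  let ?C = "(UNIV :: rat list set) \<times> lists ?V \<times> (UNIV :: rat list list set) \<times> (UNIV :: rat set) \<times>
    lists (lists ?D)"
  have "countable (\<Union>g\<in>set gs. Apart (fst g) (snd g))"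
    by (rule countable_UN[OF countable_finite]) (use assms(1) in auto)
  moreover have "countable (\<Union>\<alpha>\<in>set rs. dense_subset (dd \<alpha>))"
    by (rule countable_UN[OF countable_finite]) (use assms(2) dense_subset(1) in auto)
  ultimately show "countable ?C"
    by (intro countable_SIGMA countable_lists countable_insert countable_image) auto
  fix p :: "('k, 'w) cond" and xs assume cp: "is_cond Apart dd p"
  have V: "cf p \<alpha> a \<in> ?V" if "(\<alpha>, a) \<in> set gs" for \<alpha> a
  proof (cases "cf p \<alpha> a")
    case (Some x)
    then have "x \<in> (\<Union>g\<in>set gs. Apart (fst g) (snd g))"
      using that is_cond_value_in_Apart[OF cp Some] by (intro UN_I[of "(\<alpha>, a)"]) simp_all
    then show ?thesis using Some by simp
  qed simp
  have "map (\<lambda>(\<alpha>, a). cf p \<alpha> a) gs \<in> lists ?V"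
  proof (intro in_listsI ballI)
    fix v assume "v \<in> set (map (\<lambda>(\<alpha>, a). cf p \<alpha> a) gs)"
    then obtain \<alpha> a where "(\<alpha>, a) \<in> set gs" "v = cf p \<alpha> a" by auto
    then show "v \<in> ?V" using V by simp
  qed
  moreover have "0 < real_of_rat (margin_of dd p) / 4"
    using cond_marginD(1)[OF cond_margin_margin_of[OF cp]] by (simp add: zero_less_of_rat_iff)
  then have "preimage_approx (dd \<alpha>) (of_rat (margin_of dd p) / 4) f x \<in> insert None (Some ` dense_subset (dd \<alpha>))"
    for \<alpha> f x by (rule preimage_approx_in_dense_subset[OF assms(2)])
  then have "map (\<lambda>\<alpha>. map (preimage_approx (dd \<alpha>) (of_rat (margin_of dd p) / 4) (cf p \<alpha>)) xs) rs \<in> lists (lists ?D)"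
    by fastforce
  ultimately show "cond_code dd rs gs xs p \<in> ?C"
    unfolding cond_code_def by simp
qed

lemma uncountable_conds_same_code:
  fixes Apart :: "'k \<Rightarrow> 'w \<Rightarrow> 'w set" and dd :: "'k \<Rightarrow> 'w \<Rightarrow> 'w \<Rightarrow> real"
  assumes "\<And>\<alpha> i. countable (Apart \<alpha> i)" "\<And>\<alpha>. separable_metric (dd \<alpha>)"
    and T: "uncountable T" "\<forall>p\<in>T. is_cond Apart dd p" and delta: "cond_delta_system T R U G"
  obtains rs gs us new T' where "set rs = R" "set gs = G" "set us = U"
    "\<forall>p\<in>T. distinct (us @ new p) \<and> set (us @ new p) = cu p"
    "T' \<subseteq> T" "uncountable T'"
    "\<forall>p\<in>T'. \<forall>q\<in>T'. cond_code dd rs gs (us @ new p) p = cond_code dd rs gs (us @ new q) q"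
proof -
  have R: "cw p \<inter> cw q = R" and U: "cu p \<inter> cu q = U" and G: "cond_dom_pairs p \<inter> cond_dom_pairs q = G"
    if "p \<in> T" "q \<in> T" "p \<noteq> q" for p q
    using delta that unfolding cond_delta_system_def by blast+
  obtain p0 where "p0 \<in> T" using T(1) by (metis countable_empty ex_in_conv)
  obtain q0 where "q0 \<in> T" "q0 \<noteq> p0" by (rule uncountable_ex_neq[OF T(1)])
  have "finite R" "finite U" "finite G"
    using R[OF \<open>p0 \<in> T\<close> \<open>q0 \<in> T\<close>] U[OF \<open>p0 \<in> T\<close> \<open>q0 \<in> T\<close>] G[OF \<open>p0 \<in> T\<close> \<open>q0 \<in> T\<close>] \<open>q0 \<noteq> p0\<close>
      is_condD(1,2)[of Apart dd p0] finite_cond_dom_pairs[of Apart dd p0] T(2) \<open>p0 \<in> T\<close> by auto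
  then obtain rs gs us where rs: "set rs = R" and gs: "set gs = G" and us: "set us = U" "distinct us"
    by (metis finite_distinct_list finite_list)
  define new where "new p = (SOME l. set l = cu p - U \<and> distinct l)" for p :: "('k, 'w) cond"
  have enum: "distinct (us @ new p) \<and> set (us @ new p) = cu p" if "p \<in> T" for p
  proof -
    obtain q where "q \<in> T" "q \<noteq> p" by (rule uncountable_ex_neq[OF T(1)])
    then have "U \<subseteq> cu p" using U[OF that] by blast
    moreover have "finite (cu p - U)" using is_condD(2) T(2) that by blast
    then have "set (new p) = cu p - U \<and> distinct (new p)"
      unfolding new_def by (rule someI_ex[OF finite_distinct_list])
    ultimately show ?thesis using us by auto
  qed
  obtain C where "countable C" and C: "\<And>p xs. is_cond Apart dd p \<Longrightarrow> cond_code dd rs gs xs p \<in> C"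
    by (rule countable_cond_codes[where Apart = Apart and dd = dd and rs = rs and gs = gs, OF assms(1,2)]) auto
  have "(\<lambda>p. cond_code dd rs gs (us @ new p) p) ` T \<subseteq> C" using C T(2) by blast
  then obtain c where c: "uncountable {p\<in>T. cond_code dd rs gs (us @ new p) p = c}"
    using \<open>countable C\<close> by (rule uncountable_fiber[OF T(1)])
  show thesis
    by (rule that[of rs gs us new, OF rs gs us(1) _ Collect_restrict c]) (use enum in auto)
qed

locale same_code =
  fixes Apart :: "'k \<Rightarrow> 'w \<Rightarrow> 'w set" and dd :: "'k \<Rightarrow> 'w \<Rightarrow> 'w \<Rightarrow> real"
    and p q :: "('k, 'w) cond" and rs :: "'k list" and gs :: "('k \<times> 'w) list" and us xs ys :: "'w list"
  assumes cond_p: "is_cond Apart dd p" and cond_q: "is_cond Apart dd q"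
    and Apart_disjoint: "\<And>\<alpha> i j. i \<noteq> j \<Longrightarrow> Apart \<alpha> i \<inter> Apart \<alpha> j = {}"
    and dd_metric: "\<And>\<alpha>. metric_on UNIV (dd \<alpha>)"
    and dd_separable: "\<And>\<alpha>. separable_metric (dd \<alpha>)"
    and root_cw: "cw p \<inter> cw q = set rs"
    and root_cu: "cu p \<inter> cu q = set us"
    and root_dom_pairs: "cond_dom_pairs p \<inter> cond_dom_pairs q = set gs"
    and enum_p: "distinct (us @ xs)" "set (us @ xs) = cu p"
    and enum_q: "distinct (us @ ys)" "set (us @ ys) = cu q"
    and code_eq: "cond_code dd rs gs (us @ xs) p = cond_code dd rs gs (us @ ys) q"
    and ran_new_unique: "\<And>x \<alpha> \<beta>. x \<in> cu p - cu q \<Longrightarrow> \<alpha> \<in> cw p \<inter> cw q \<Longrightarrow> \<beta> \<in> cw p \<inter> cw q \<Longrightarrow>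
       x \<in> ran (cf p \<alpha>) \<Longrightarrow> x \<in> ran (cf p \<beta>) \<Longrightarrow> \<alpha> = \<beta>"
begin

abbreviation "\<kappa> \<equiv> margin_of dd p"

lemma code_components:
  "map (ceps p) rs = map (ceps q) rs"
  "map (\<lambda>(\<alpha>, a). cf p \<alpha> a) gs = map (\<lambda>(\<alpha>, a). cf q \<alpha> a) gs"
  "map (\<lambda>x. map (cd p x) (us @ xs)) (us @ xs) = map (\<lambda>x. map (cd q x) (us @ ys)) (us @ ys)"
  "margin_of dd q = \<kappa>"
  "map (\<lambda>\<alpha>. map (preimage_approx (dd \<alpha>) (of_rat \<kappa> / 4) (cf p \<alpha>)) (us @ xs)) rs
   = map (\<lambda>\<alpha>. map (preimage_approx (dd \<alpha>) (of_rat \<kappa> / 4) (cf q \<alpha>)) (us @ ys)) rs"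
proof -
  show \<kappa>: "margin_of dd q = \<kappa>" using code_eq unfolding cond_code_def by simp
  show "map (ceps p) rs = map (ceps q) rs"
    "map (\<lambda>(\<alpha>, a). cf p \<alpha> a) gs = map (\<lambda>(\<alpha>, a). cf q \<alpha> a) gs"
    "map (\<lambda>x. map (cd p x) (us @ xs)) (us @ xs) = map (\<lambda>x. map (cd q x) (us @ ys)) (us @ ys)"
    using code_eq unfolding cond_code_def by simp_all
  show "map (\<lambda>\<alpha>. map (preimage_approx (dd \<alpha>) (of_rat \<kappa> / 4) (cf p \<alpha>)) (us @ xs)) rs
    = map (\<lambda>\<alpha>. map (preimage_approx (dd \<alpha>) (of_rat \<kappa> / 4) (cf q \<alpha>)) (us @ ys)) rs"
    using code_eq unfolding cond_code_def prod.inject \<kappa> by (elim conjE)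
qed

lemma length_enum: "length (us @ xs) = length (us @ ys)"
  using arg_cong[OF code_components(3), of length] by simp

definition \<sigma> :: "'w \<Rightarrow> 'w" where
  "\<sigma> = (SOME \<sigma>. bij_betw \<sigma> (cu p) (cu q) \<and> (\<forall>i<length (us @ xs). \<sigma> ((us @ xs) ! i) = (us @ ys) ! i))"

lemma \<sigma>_enum: "bij_betw \<sigma> (cu p) (cu q)" "\<And>i. i < length (us @ xs) \<Longrightarrow> \<sigma> ((us @ xs) ! i) = (us @ ys) ! i"
proof -
  obtain \<tau> where "bij_betw \<tau> (set (us @ xs)) (set (us @ ys))"
    "\<And>i. i < length (us @ xs) \<Longrightarrow> \<tau> ((us @ xs) ! i) = (us @ ys) ! i"
    using nth_bij_betw_distinct[OF enum_p(1) enum_q(1) length_enum] by blast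
  then have "\<exists>\<sigma>. bij_betw \<sigma> (cu p) (cu q) \<and> (\<forall>i<length (us @ xs). \<sigma> ((us @ xs) ! i) = (us @ ys) ! i)"
    using enum_p(2) enum_q(2) by auto
  from someI_ex[OF this] show "bij_betw \<sigma> (cu p) (cu q)" "\<And>i. i < length (us @ xs) \<Longrightarrow> \<sigma> ((us @ xs) ! i) = (us @ ys) ! i"
    unfolding \<sigma>_def by blast+
qed

lemma enum_index: "x \<in> cu p \<Longrightarrow> \<exists>i<length (us @ xs). x = (us @ xs) ! i"
  using enum_p(2) by (metis in_set_conv_nth)

lemma \<sigma>_common:
  assumes "x \<in> cu p \<inter> cu q"
  shows "\<sigma> x = x"
proof -
  obtain i where "i < length us" "x = us ! i" using assms root_cu by (metis in_set_conv_nth)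
  then show ?thesis using \<sigma>_enum(2)[of i] by (simp add: nth_append)
qed

lemma \<sigma>_isometry: "x \<in> cu p \<Longrightarrow> y \<in> cu p \<Longrightarrow> cd q (\<sigma> x) (\<sigma> y) = cd p x y"
proof -
  assume "x \<in> cu p" "y \<in> cu p"
  then obtain i j where ij: "i < length (us @ xs)" "x = (us @ xs) ! i" "j < length (us @ xs)" "y = (us @ xs) ! j"
    using enum_index by blast
  have "map (cd p x) (us @ xs) = map (cd q (\<sigma> x)) (us @ ys)"
    using map_eq_map_nth[OF code_components(3) ij(1)] ij(2) \<sigma>_enum(2)[OF ij(1)] by simp
  from map_eq_map_nth[OF this ij(3)] show ?thesis using ij(4) \<sigma>_enum(2)[OF ij(3)] by simp
qed

lemma ceps_common: "\<alpha> \<in> cw p \<inter> cw q \<Longrightarrow> ceps q \<alpha> = ceps p \<alpha>"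
  using code_components(1) root_cw by (simp add: map_eq_conv)

lemma cf_common:
  assumes "\<alpha> \<in> cw p \<inter> cw q" "cf p \<alpha> a = Some x" "cf q \<alpha> a = Some y"
  shows "x = y"
proof -
  have "(\<alpha>, a) \<in> set gs" using assms root_dom_pairs by (auto simp: cond_dom_pairs_def)
  then show ?thesis using code_components(2) assms(2,3) by (force simp: map_eq_conv)
qed

lemma preimage_approx_\<sigma>:
  assumes "\<alpha> \<in> cw p \<inter> cw q" "x \<in> cu p"
  shows "preimage_approx (dd \<alpha>) (of_rat \<kappa> / 4) (cf p \<alpha>) x = preimage_approx (dd \<alpha>) (of_rat \<kappa> / 4) (cf q \<alpha>) (\<sigma> x)"
proof -
  obtain i where i: "i < length (us @ xs)" "x = (us @ xs) ! i" using enum_index assms(2) by blast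
  have "\<alpha> \<in> set rs" using assms(1) root_cw by blast
  then have "map (preimage_approx (dd \<alpha>) (of_rat \<kappa> / 4) (cf p \<alpha>)) (us @ xs)
    = map (preimage_approx (dd \<alpha>) (of_rat \<kappa> / 4) (cf q \<alpha>)) (us @ ys)"
    using code_components(5) by (simp add: map_eq_conv)
  from map_eq_map_nth[OF this i(1)] show ?thesis unfolding i(2) \<sigma>_enum(2)[OF i(1)] .
qed

lemma ran_\<sigma>: "\<alpha> \<in> cw p \<inter> cw q \<Longrightarrow> x \<in> cu p \<Longrightarrow> x \<in> ran (cf p \<alpha>) \<longleftrightarrow> \<sigma> x \<in> ran (cf q \<alpha>)"
  using preimage_approx_\<sigma> preimage_approx_eq_None_iff by metis

lemma preimages_close:
  assumes \<alpha>: "\<alpha> \<in> cw p \<inter> cw q" and a: "cf p \<alpha> a = Some x" and b: "cf q \<alpha> b = Some (\<sigma> x)"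
  shows "dd \<alpha> a b < of_rat \<kappa> / 2"
proof -
  define z where "z = dense_approx (dd \<alpha>) (of_rat \<kappa> / 4) a"
  have zb: "z = dense_approx (dd \<alpha>) (of_rat \<kappa> / 4) b"
    using preimage_approx_\<sigma>[OF \<alpha> is_cond_value_in_cu[OF cond_p a]]
      cond_preimage_approx[OF cond_p a] cond_preimage_approx[OF cond_q b] by (simp add: z_def)
  have pos: "0 < real_of_rat \<kappa> / 4"
    using cond_marginD(1)[OF cond_margin_margin_of[OF cond_p]] by (simp add: zero_less_of_rat_iff)
  have "dd \<alpha> a z < of_rat \<kappa> / 4" unfolding z_def by (rule dense_approx(2)[OF dd_separable pos])
  moreover have "dd \<alpha> b z < of_rat \<kappa> / 4" unfolding zb by (rule dense_approx(2)[OF dd_separable pos])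
  moreover have "dd \<alpha> a b \<le> dd \<alpha> a z + dd \<alpha> b z"
    using metric_onD(3,4)[OF dd_metric] by (metis UNIV_I)
  ultimately show ?thesis by linarith
qed

sublocale amalgamation Apart dd p q \<sigma> \<kappa>
  using cond_p cond_q Apart_disjoint dd_metric \<sigma>_enum(1) \<sigma>_common \<sigma>_isometry ceps_common cf_common ran_\<sigma>
    cond_margin_margin_of[OF cond_p] preimages_close ran_new_unique
  by unfold_locales

end

lemma same_code_off_overlaps:
  assumes "\<And>\<alpha>. A \<alpha> = (\<Union>i. Apart \<alpha> i)" "\<And>\<alpha> i j. i \<noteq> j \<Longrightarrow> Apart \<alpha> i \<inter> Apart \<alpha> j = {}"
    "\<And>\<alpha>. metric_on UNIV (dd \<alpha>)" "\<And>\<alpha>. separable_metric (dd \<alpha>)"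
    and cond: "is_cond Apart dd p" "is_cond Apart dd q"
    and root: "cw p \<inter> cw q = set rs" "cu p \<inter> cu q = set us" "cond_dom_pairs p \<inter> cond_dom_pairs q = set gs"
    and enum: "distinct (us @ xs)" "set (us @ xs) = cu p" "distinct (us @ ys)" "set (us @ ys) = cu q"
    and "cond_code dd rs gs (us @ xs) p = cond_code dd rs gs (us @ ys) q"
    and avoid: "(cu p - set us) \<inter> overlaps A (set rs) = {}"
  shows "same_code Apart dd p q rs gs us xs ys"
proof
  fix x \<alpha> \<beta> assume x: "x \<in> cu p - cu q" and "\<alpha> \<in> cw p \<inter> cw q" "\<beta> \<in> cw p \<inter> cw q"
    and ran: "x \<in> ran (cf p \<alpha>)" "x \<in> ran (cf p \<beta>)"
  moreover have "x \<notin> overlaps A (set rs)" using avoid x root(2) by blast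
  ultimately show "\<alpha> = \<beta>" using cond_ran_unique_off_overlaps[OF cond(1) assms(1)] root(1) by blast
qed (fact assms)+

section \<open>The chain condition\<close>

lemma uncountable_conds_compatible_pair:
  fixes A :: "'k \<Rightarrow> 'w set" and Apart :: "'k \<Rightarrow> 'w \<Rightarrow> 'w set" and dd :: "'k \<Rightarrow> 'w \<Rightarrow> 'w \<Rightarrow> real"
  assumes A_ad: "\<And>\<alpha> \<beta>. \<alpha> \<noteq> \<beta> \<Longrightarrow> finite (A \<alpha> \<inter> A \<beta>)"
    and A_part: "\<And>\<alpha>. A \<alpha> = (\<Union>i. Apart \<alpha> i)"
    and Apart_disjoint: "\<And>\<alpha> i j. i \<noteq> j \<Longrightarrow> Apart \<alpha> i \<inter> Apart \<alpha> j = {}"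
    and Apart_countable: "\<And>\<alpha> i. countable (Apart \<alpha> i)"
    and dd_metric: "\<And>\<alpha>. metric_on UNIV (dd \<alpha>)"
    and dd_separable: "\<And>\<alpha>. separable_metric (dd \<alpha>)"
    and S: "uncountable S" "\<forall>p\<in>S. is_cond Apart dd p"
  obtains p q where "p \<in> S" "q \<in> S" "p \<noteq> q" "cond_compatible Apart dd p q"
proof -
  obtain T R U G where T: "T \<subseteq> S" "uncountable T" and delta: "cond_delta_system T R U G"
    by (rule uncountable_conds_delta_system[OF S])
  have cond: "\<forall>p\<in>T. is_cond Apart dd p" using S(2) T(1) by blast
  obtain rs gs us new T' where rs: "set rs = R" and gs: "set gs = G" and us: "set us = U"
    and enum: "\<forall>p\<in>T. distinct (us @ new p) \<and> set (us @ new p) = cu p"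
    and T': "T' \<subseteq> T" "uncountable T'"
    and code: "\<forall>p\<in>T'. \<forall>q\<in>T'. cond_code dd rs gs (us @ new p) p = cond_code dd rs gs (us @ new q) q"
    by (rule uncountable_conds_same_code[OF Apart_countable dd_separable T(2) cond delta])
  have root: "cw p \<inter> cw q = R" "cu p \<inter> cu q = U" "cond_dom_pairs p \<inter> cond_dom_pairs q = G"
    if "p \<in> T" "q \<in> T" "p \<noteq> q" for p q
    using delta that unfolding cond_delta_system_def by blast+
  have "finite (overlaps A R)" using rs A_ad by (intro finite_overlaps) auto
  moreover have "cu p \<inter> cu q = U" if "p \<in> T'" "q \<in> T'" "p \<noteq> q" for p q
    using root(2) T'(1) that by blast
  ultimately have "countable {p\<in>T'. (cu p - U) \<inter> overlaps A R \<noteq> {}}"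
    by (intro countable_delta_system_meeting_finite[where g = cu])
  from uncountable_minus_countable[OF T'(2) this]
  have "T' - {p\<in>T'. (cu p - U) \<inter> overlaps A R \<noteq> {}} \<noteq> {}" by (metis countable_empty)
  then obtain p where p: "p \<in> T'" "(cu p - U) \<inter> overlaps A R = {}" by blast
  obtain q where q: "q \<in> T'" "q \<noteq> p" by (rule uncountable_ex_neq[OF T'(2)])
  have pq: "p \<in> T" "q \<in> T" using p q T'(1) by auto
  have "same_code Apart dd p q rs gs us (new p) (new q)"
    using A_part Apart_disjoint dd_metric dd_separable
  proof (rule same_code_off_overlaps)
    show "is_cond Apart dd p" "is_cond Apart dd q" using cond pq by simp_all
    show "cw p \<inter> cw q = set rs" "cu p \<inter> cu q = set us" "cond_dom_pairs p \<inter> cond_dom_pairs q = set gs"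
      using root[OF pq q(2)[symmetric]] rs us gs by simp_all
    show "distinct (us @ new p)" "set (us @ new p) = cu p" "distinct (us @ new q)" "set (us @ new q) = cu q"
      using enum pq by simp_all
    show "cond_code dd rs gs (us @ new p) p = cond_code dd rs gs (us @ new q) q" using code p(1) q(1) by blast
    show "(cu p - set us) \<inter> overlaps A (set rs) = {}" using p(2) rs us by simp
  qed
  then interpret same_code Apart dd p q rs gs us "new p" "new q" .
  show thesis using pq T(1) q(2) compatible by (intro that[of p q]) auto
qed

theorem lemma5p4:
  fixes A :: "'k \<Rightarrow> 'w set"
    and Apart :: "'k \<Rightarrow> 'w \<Rightarrow> 'w set"
    and dd :: "'k \<Rightarrow> 'w \<Rightarrow> 'w \<Rightarrow> real"
    and S :: "('k, 'w) cond set"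
  assumes omega1: "aleph1_type TYPE('w)"
    and omega3: "aleph3_type TYPE('k)"
    and A_card: "\<And>\<alpha>. (card_of (A \<alpha>), card_of (UNIV :: 'w set)) \<in> ordIso"
    and A_ad: "\<And>\<alpha> \<beta>. \<alpha> \<noteq> \<beta> \<Longrightarrow> finite (A \<alpha> \<inter> A \<beta>)"
    and A_part: "\<And>\<alpha>. A \<alpha> = (\<Union>i. Apart \<alpha> i)"
    and A_disj: "\<And>\<alpha> i j. i \<noteq> j \<Longrightarrow> Apart \<alpha> i \<inter> Apart \<alpha> j = {}"
    and A_ctbl: "\<And>\<alpha> i. countable (Apart \<alpha> i) \<and> infinite (Apart \<alpha> i)"
    and d_metric: "\<And>\<alpha>. metric_on UNIV (dd \<alpha>)"
    and d_sep: "\<And>\<alpha>. separable_metric (dd \<alpha>)"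
    and anti: "cond_antichain Apart dd S"
  shows "countable S"
proof (rule ccontr)
  assume "uncountable S"
  have conds: "\<forall>p\<in>S. is_cond Apart dd p"
    and incompatible: "\<forall>p\<in>S. \<forall>q\<in>S. p \<noteq> q \<longrightarrow> \<not> cond_compatible Apart dd p q"
    using anti unfolding cond_antichain_def by blast+
  have Apart_countable: "\<And>\<alpha> i. countable (Apart \<alpha> i)" using A_ctbl by blast
  obtain p q where "p \<in> S" "q \<in> S" "p \<noteq> q" "cond_compatible Apart dd p q"
    using A_ad A_part A_disj Apart_countable d_metric d_sep \<open>uncountable S\<close> conds
    by (rule uncountable_conds_compatible_pair)
  with incompatible show False by blast
qed

end
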